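(* Let $d \ge 4$ and $\hat X \in U(d)$. Let $F = \int d\psi\, |\langle\psi|\hat X|\psi\rangle|^2$ and $D = \sqrt{\int d\psi\, |\langle\psi|\hat X|\psi\rangle|^4 - F^2}$. Let $P := |\mathrm{tr}(\hat X)|$ and $Q := |\mathrm{tr}(\hat X^2) + \mathrm{tr}(\hat X)^2|$. Then $(F,D)$ uniquely determines $P$ and $Q$; specifically, $$P^2 = d(d+1)F - d,\qquad Q^2 = d(d+1)(d+2)(d+3)(D^2+F^2) - 2d(d+3) - 4(d+2)P^2.$$
   Context: $d\psi$ denotes the unitarily invariant (Haar-induced) probability measure on unit vectors of $\mathbb{C}^d$. *)

theory Defs
  imports "HOL-Probability.Probability"
begin

definition cadjoint :: "complex^'n^'n \<Rightarrow> complex^'n^'n" where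
  "cadjoint A = (\<chi> i j. cnj (A $ j $ i))"

definition unitary :: "complex^'n^'n \<Rightarrow> bool" where
  "unitary U \<longleftrightarrow> U ** cadjoint U = mat 1 \<and> cadjoint U ** U = mat 1"

definition ctrace :: "complex^'n^'n \<Rightarrow> complex" where
  "ctrace A = (\<Sum>i\<in>UNIV. A $ i $ i)"

definition braket :: "complex^'n \<Rightarrow> complex^'n^'n \<Rightarrow> complex" where
  "braket \<psi> X = (\<Sum>i\<in>UNIV. cnj (\<psi> $ i) * (X *v \<psi>) $ i)"

definition unitarily_invariant_sphere_measure :: "(complex^'n) measure \<Rightarrow> bool" where
  "unitarily_invariant_sphere_measure M \<longleftrightarrow>
     prob_space M \<and>
     sets M = sets (restrict_space borel (sphere 0 1)) \<and>
     space M = sphere 0 1 \<and>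
     (\<forall>U. unitary U \<longrightarrow> distr M M (\<lambda>\<psi>. U *v \<psi>) = M)"

end

(*
  Both quantities are integrals of products of four quadratic forms <A> = <psi|A|psi>: on the
  unit sphere |<X>|^2 = <X> <X^*> <1> <1> and |<X>|^4 = <X> <X> <X^*> <X^*>, and
  D^2 + F^2 = E |<X>|^4.  Expanding in coordinates reduces everything to the moments
  E [conj psi_a1 ... conj psi_a4 psi_b1 ... psi_b4].  Invariance of the measure under diagonal
  phases kills such a moment unless b is a rearrangement of a; invariance under coordinate
  permutations makes it depend only on the equality pattern of a; and invariance under the
  Hadamard rotation in the plane of two coordinates yields linear relations between the
  patterns.  Using four distinct coordinates (this is where d >= 4 enters) these relations show
  that the moment is e times the number of permutations sigma of four elements with
  b o sigma = a, where e = E |psi_1 psi_2 psi_3 psi_4|^2.  Summing over the indices turns each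
  sigma into a product of traces along its cycles, a Wick formula.  For four identity matrices
  it gives e = 1 / (d (d+1) (d+2) (d+3)); for the factors X, X^*, 1, 1 and X, X, X^*, X^* it gives
  d (d+1) F = |tr X|^2 + d and
  d (d+1) (d+2) (d+3) (D^2 + F^2) = |tr X^2 + (tr X)^2|^2 + 2 d (d+3) + 4 (d+2) |tr X|^2.
*)

theory Submission
  imports Defs "HOL-Combinatorics.Permutations"
begin

section \<open>Hermitian products and unitary matrices\<close>

definition cinner :: "complex^'n \<Rightarrow> complex^'n \<Rightarrow> complex" where
  "cinner x y = (\<Sum>i\<in>UNIV. cnj (x $ i) * y $ i)"

lemma braket_eq_cinner: "braket \<psi> A = cinner \<psi> (A *v \<psi>)"
  unfolding braket_def cinner_def ..

lemma braket_expand: "braket \<psi> A = (\<Sum>a\<in>UNIV. \<Sum>b\<in>UNIV. cnj (\<psi> $ a) * A $ a $ b * \<psi> $ b)"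
  unfolding braket_def matrix_vector_mult_def by (simp add: sum_distrib_left mult.assoc)

lemma cinner_adjoint: "cinner (A *v x) y = cinner x (cadjoint A *v y)"
proof -
  have "cinner (A *v x) y = (\<Sum>i\<in>UNIV. \<Sum>j\<in>UNIV. cnj (A $ i $ j) * cnj (x $ j) * y $ i)"
    unfolding cinner_def matrix_vector_mult_def by (simp add: sum_distrib_right)
  also have "\<dots> = (\<Sum>j\<in>UNIV. \<Sum>i\<in>UNIV. cnj (A $ i $ j) * cnj (x $ j) * y $ i)"
    by (rule sum.swap)
  also have "\<dots> = cinner x (cadjoint A *v y)"
    unfolding cinner_def matrix_vector_mult_def cadjoint_def by (simp add: sum_distrib_left mult_ac)
  finally show ?thesis .
qed

lemma cnj_cinner: "cnj (cinner x y) = cinner y x"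
  unfolding cinner_def by (simp add: mult.commute)

lemma cinner_self: "cinner x x = of_real (norm x ^ 2)"
proof -
  have "norm x ^ 2 = (\<Sum>i\<in>UNIV. cmod (x $ i) ^ 2)"
    unfolding norm_vec_def L2_set_def by (simp add: sum_nonneg)
  then show ?thesis
    unfolding cinner_def of_real_sum
    by (auto intro!: sum.cong simp: complex_norm_square mult.commute simp del: of_real_power)
qed

lemma cnj_braket: "cnj (braket \<psi> A) = braket \<psi> (cadjoint A)"
  unfolding braket_eq_cinner cnj_cinner cinner_adjoint ..

lemma braket_mat_1: "braket \<psi> (mat 1) = of_real (norm \<psi> ^ 2)"
  unfolding braket_eq_cinner matrix_vector_mul_lid cinner_self ..

lemma continuous_on_braket [continuous_intros]: "continuous_on UNIV (\<lambda>\<psi>. braket \<psi> A)"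
  unfolding braket_expand by (intro continuous_intros)

lemma unitaryI:
  assumes "\<And>v. cadjoint U *v (U *v v) = v"
  shows "unitary U"
proof -
  have "cadjoint U ** U = mat 1"
    using assms by (simp add: matrix_eq flip: matrix_vector_mul_assoc)
  then show ?thesis
    unfolding unitary_def using matrix_left_right_inverse by blast
qed

lemma cinner_unitary: "unitary U \<Longrightarrow> cinner (U *v x) (U *v y) = cinner x y"
  unfolding unitary_def by (simp add: cinner_adjoint matrix_vector_mul_assoc)

lemma norm_unitary:
  assumes "unitary U"
  shows "norm (U *v x) = norm x"
proof -
  have "norm (U *v x) ^ 2 = norm x ^ 2"
    using cinner_unitary[OF assms, of x x] unfolding cinner_self of_real_eq_iff .
  then show ?thesis
    by (simp add: power2_eq_iff_nonneg)
qed

definition diag_mat :: "('n \<Rightarrow> complex) \<Rightarrow> complex^'n^'n" where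
  "diag_mat f = (\<chi> i j. of_bool (i = j) * f i)"

lemma diag_mat_mult_vec: "(diag_mat f *v x) $ i = f i * x $ i"
  unfolding diag_mat_def matrix_vector_mult_def by (simp add: mult.assoc)

lemma cadjoint_diag_mat: "cadjoint (diag_mat f) = diag_mat (\<lambda>i. cnj (f i))"
  unfolding diag_mat_def cadjoint_def by (simp add: vec_eq_iff)

lemma unitary_diag_mat:
  assumes "\<And>i. cmod (f i) = 1"
  shows "unitary (diag_mat f)"
proof (rule unitaryI)
  have "cnj (f i) * f i = 1" for i
    using complex_norm_square[of "f i"] assms by (simp add: mult.commute)
  then show "cadjoint (diag_mat f) *v (diag_mat f *v v) = v" for v
    by (simp add: vec_eq_iff cadjoint_diag_mat diag_mat_mult_vec mult.assoc[symmetric])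
qed

definition phase_mat :: "'n \<Rightarrow> complex \<Rightarrow> complex^'n^'n" where
  "phase_mat m c = diag_mat (\<lambda>i. if i = m then c else 1)"

lemma phase_mat_mult_vec: "(phase_mat m c *v x) $ i = (if i = m then c * x $ i else x $ i)"
  unfolding phase_mat_def diag_mat_mult_vec by simp

lemma unitary_phase_mat: "cmod c = 1 \<Longrightarrow> unitary (phase_mat m c)"
  unfolding phase_mat_def by (rule unitary_diag_mat) simp

definition perm_mat :: "('n \<Rightarrow> 'n) \<Rightarrow> complex^'n^'n" where
  "perm_mat p = (\<chi> i j. of_bool (j = p i))"

lemma perm_mat_mult_vec: "(perm_mat p *v x) $ i = x $ p i"
  unfolding perm_mat_def matrix_vector_mult_def by simp

lemma cadjoint_perm_mat: "bij p \<Longrightarrow> cadjoint (perm_mat p) = perm_mat (inv p)"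
  unfolding perm_mat_def cadjoint_def by (auto simp: vec_eq_iff bij_inv_eq_iff)

lemma unitary_perm_mat: "bij p \<Longrightarrow> unitary (perm_mat p)"
  by (rule unitaryI) (simp add: vec_eq_iff cadjoint_perm_mat perm_mat_mult_vec bij_is_surj[THEN surj_f_inv_f])

definition hadamard_mat :: "'n \<Rightarrow> 'n \<Rightarrow> complex^'n^'n" where
  "hadamard_mat x y = (\<chi> i j.
     if i = x then (of_bool (j = x) + of_bool (j = y)) / complex_of_real (sqrt 2)
     else if i = y then (of_bool (j = x) - of_bool (j = y)) / complex_of_real (sqrt 2)
     else of_bool (j = i))"

lemma hadamard_mat_mult_vec:
  assumes "x \<noteq> y"
  shows "(hadamard_mat x y *v v) $ i =
    (if i = x then (v $ x + v $ y) / sqrt 2 else if i = y then (v $ x - v $ y) / sqrt 2 else v $ i)"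
  unfolding hadamard_mat_def matrix_vector_mult_def using assms
  by (simp add: algebra_simps sum.distrib sum_subtractf flip: sum_divide_distrib)

lemma unitary_hadamard_mat:
  assumes "x \<noteq> y"
  shows "unitary (hadamard_mat x y)"
proof (rule unitaryI)
  have self_adjoint: "cadjoint (hadamard_mat x y) = hadamard_mat x y"
    unfolding hadamard_mat_def cadjoint_def using assms by (auto simp: vec_eq_iff)
  have "complex_of_real (sqrt 2) * complex_of_real (sqrt 2) = 2"
    by (simp flip: of_real_mult)
  then show "cadjoint (hadamard_mat x y) *v (hadamard_mat x y *v v) = v" for v
    unfolding self_adjoint using assms by (simp add: vec_eq_iff hadamard_mat_mult_vec field_simps)
qed

section \<open>Unitarily invariant measures on the sphere\<close>

lemma obtain_unimodular_power_eq_minus_one: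
  fixes j l :: nat
  assumes "j \<noteq> l"
  obtains c :: complex where "cmod c = 1" "cnj c ^ j * c ^ l = -1"
proof
  define t where "t = pi / (real l - real j)"
  have "cnj (cis t) ^ j * cis t ^ l = cis ((real l - real j) * t)"
    unfolding cis_cnj Complex.DeMoivre cis_mult by (rule arg_cong[where f = cis]) (simp add: algebra_simps)
  also have "(real l - real j) * t = pi"
    unfolding t_def using assms by simp
  finally show "cnj (cis t) ^ j * cis t ^ l = -1"
    by simp
qed simp

locale unitarily_invariant_sphere =
  fixes M :: "(complex^'n) measure"
  assumes invariant_measure: "unitarily_invariant_sphere_measure M"
begin

lemma prob_space_M: "prob_space M"
  using invariant_measure unfolding unitarily_invariant_sphere_measure_def by auto

lemma space_M: "space M = sphere 0 1"
  using invariant_measure unfolding unitarily_invariant_sphere_measure_def by auto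

lemma sets_M: "sets M = sets (restrict_space borel (sphere 0 1))"
  using invariant_measure unfolding unitarily_invariant_sphere_measure_def by auto

lemma borel_measurable_continuous:
  fixes f :: "complex^'n \<Rightarrow> 'b::{banach,second_countable_topology}"
  assumes "continuous_on UNIV f"
  shows "f \<in> borel_measurable M"
  using measurable_restrict_space1[OF borel_measurable_continuous_onI[OF assms]] sets_M
  by (simp cong: measurable_cong_sets)

lemma integrable_continuous:
  fixes f :: "complex^'n \<Rightarrow> 'b::{banach,second_countable_topology}"
  assumes "continuous_on UNIV f"
  shows "integrable M f"
proof -
  interpret prob_space M
    by (rule prob_space_M)
  have "bounded (f ` sphere 0 1)"
    by (rule compact_imp_bounded, rule compact_continuous_image[OF continuous_on_subset[OF assms]]) auto
  then obtain B where B: "\<forall>y\<in>f ` sphere 0 1. norm y \<le> B"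
    unfolding bounded_iff by blast
  show ?thesis
  proof (rule integrable_const_bound[where B = B])
    show "AE x in M. norm (f x) \<le> B"
      using B space_M by (intro AE_I2) auto
  qed (rule borel_measurable_continuous[OF assms])
qed

lemma integral_unitary_invariant:
  fixes f :: "complex^'n \<Rightarrow> 'b::{banach,second_countable_topology}"
  assumes "unitary U" "continuous_on UNIV f"
  shows "(\<integral>x. f (U *v x) \<partial>M) = integral\<^sup>L M f"
proof -
  have "(\<lambda>x. U *v x) \<in> measurable (restrict_space borel (sphere 0 1)) (restrict_space borel (sphere 0 1))"
    unfolding matrix_vector_mult_def
    by (intro measurable_restrict_space3 borel_measurable_continuous_onI continuous_intros)
       (auto simp: norm_unitary[OF assms(1), unfolded matrix_vector_mult_def])
  then have "(\<lambda>x. U *v x) \<in> measurable M M"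
    using sets_M by (simp cong: measurable_cong_sets)
  then have "(\<integral>x. f (U *v x) \<partial>M) = integral\<^sup>L (distr M M (\<lambda>x. U *v x)) f"
    by (simp add: integral_distr borel_measurable_continuous assms(2))
  also have "distr M M (\<lambda>x. U *v x) = M"
    using invariant_measure assms(1) unfolding unitarily_invariant_sphere_measure_def by auto
  finally show ?thesis .
qed

text \<open>A phase on one coordinate acts on h by a nontrivial character, so it can be chosen to flip its sign.\<close>

lemma integral_eq_0_if_phase_covariant:
  fixes h :: "complex^'n \<Rightarrow> complex"
  assumes "continuous_on UNIV h" "j \<noteq> l"
    and "\<And>c \<psi>. cmod c = 1 \<Longrightarrow> h (phase_mat m c *v \<psi>) = cnj c ^ j * c ^ l * h \<psi>"
  shows "integral\<^sup>L M h = 0"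
proof -
  obtain c where c: "cmod c = 1" "cnj c ^ j * c ^ l = -1"
    using obtain_unimodular_power_eq_minus_one[OF assms(2)] .
  have "integral\<^sup>L M h = (\<integral>\<psi>. h (phase_mat m c *v \<psi>) \<partial>M)"
    using integral_unitary_invariant[OF unitary_phase_mat[OF c(1)] assms(1)] by simp
  also have "\<dots> = - integral\<^sup>L M h"
    using assms(3)[OF c(1)] c(2) by simp
  finally show ?thesis
    by simp
qed

end

section \<open>Moments of coordinate monomials\<close>

definition coord_monomial :: "nat \<Rightarrow> (nat \<Rightarrow> 'n) \<Rightarrow> (nat \<Rightarrow> 'n) \<Rightarrow> complex^'n \<Rightarrow> complex" where
  "coord_monomial n a b \<psi> = (\<Prod>k<n. cnj (\<psi> $ a k) * \<psi> $ b k)"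

definition wick_count :: "nat \<Rightarrow> (nat \<Rightarrow> 'a) \<Rightarrow> (nat \<Rightarrow> 'a) \<Rightarrow> nat" where
  "wick_count n a b = card {\<sigma>. \<sigma> permutes {..<n} \<and> (\<forall>k<n. b (\<sigma> k) = a k)}"

lemma continuous_on_coord_monomial [continuous_intros]: "continuous_on UNIV (coord_monomial n a b)"
  unfolding coord_monomial_def by (intro continuous_intros)

lemma obtain_count_neq_if_no_rearrangement:
  fixes a b :: "nat \<Rightarrow> 'a"
  assumes "\<nexists>\<sigma>. \<sigma> permutes {..<n} \<and> (\<forall>k<n. b (\<sigma> k) = a k)"
  obtains m where "card {k. k < n \<and> a k = m} \<noteq> card {k. k < n \<and> b k = m}"
proof -
  have count: "count (image_mset f (mset_set {..<n})) m = card {k. k < n \<and> f k = m}" for f m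
  proof -
    have "count (image_mset f (mset_set {..<n})) m = card (f -` {m} \<inter> {..<n})"
      by (simp add: count_image_mset Int_commute)
    also have "f -` {m} \<inter> {..<n} = {k. k < n \<and> f k = m}"
      by auto
    finally show ?thesis .
  qed
  have "image_mset a (mset_set {..<n}) \<noteq> image_mset b (mset_set {..<n})"
  proof
    assume "image_mset a (mset_set {..<n}) = image_mset b (mset_set {..<n})"
    then obtain \<sigma> where "\<sigma> permutes {..<n}" "\<forall>k\<in>{..<n}. a k = b (\<sigma> k)"
      by (rule image_mset_eq_implies_permutes[OF finite_lessThan])
    with assms show False
      by fastforce
  qed
  then show ?thesis
    using that by (metis count multiset_eqI)
qed

lemma coord_monomial_rearrange:
  fixes a b :: "nat \<Rightarrow> 'n::finite"
  assumes "\<sigma> permutes {..<n}" "\<forall>k<n. b (\<sigma> k) = a k"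
  shows "coord_monomial n a b = coord_monomial n a a"
proof
  fix \<psi> :: "complex^'n"
  have "(\<Prod>k<n. \<psi> $ b k) = (\<Prod>k<n. \<psi> $ b (\<sigma> k))"
    using prod.permute[OF assms(1), of "\<lambda>k. \<psi> $ b k"] by (simp add: o_def)
  also have "\<dots> = (\<Prod>k<n. \<psi> $ a k)"
    using assms(2) by simp
  finally show "coord_monomial n a b \<psi> = coord_monomial n a a \<psi>"
    unfolding coord_monomial_def prod.distrib by simp
qed

text \<open>Composition with a fixed rearrangement is a bijection onto the stabiliser of the pattern.\<close>

lemma wick_count_rearrange:
  assumes s: "s permutes {..<n}" "\<forall>k<n. b (s k) = a k"
  shows "wick_count n a b = wick_count n a a"
proof -
  let ?Stab = "{t. t permutes {..<n} \<and> (\<forall>k<n. a (t k) = a k)}"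
  let ?Rearr = "{\<sigma>. \<sigma> permutes {..<n} \<and> (\<forall>k<n. b (\<sigma> k) = a k)}"
  have in_range: "p k < n" if "p permutes {..<n}" "k < n" for p k
    using permutes_in_image[OF that(1), of k] that(2) by simp
  have s_inv: "inv s permutes {..<n}" "\<forall>k<n. a (inv s k) = b k"
    using s permutes_inv[OF s(1)] permutes_inverses(1)[OF s(1)] in_range by (metis, metis)
  have "bij_betw ((\<circ>) s) ?Stab ?Rearr"
  proof (rule bij_betwI[where g = "(\<circ>) (inv s)"])
    show "(\<circ>) s \<in> ?Stab \<rightarrow> ?Rearr"
      using s in_range by (auto intro: permutes_compose)
    show "(\<circ>) (inv s) \<in> ?Rearr \<rightarrow> ?Stab"
      using s_inv in_range by (auto intro: permutes_compose)
    show "inv s \<circ> (s \<circ> t) = t" for t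
      by (simp add: fun_eq_iff permutes_inverses[OF s(1)])
    show "s \<circ> (inv s \<circ> \<sigma>) = \<sigma>" for \<sigma>
      by (simp add: fun_eq_iff permutes_inverses[OF s(1)])
  qed
  then show ?thesis
    unfolding wick_count_def by (rule bij_betw_same_card[symmetric])
qed

lemma coord_monomial_phase_mat:
  "coord_monomial n a b (phase_mat m c *v \<psi>) =
     cnj c ^ card {k. k < n \<and> a k = m} * c ^ card {k. k < n \<and> b k = m} * coord_monomial n a b \<psi>"
proof -
  have pow: "(\<Prod>k<n. if P k then z else 1) = z ^ card {k. k < n \<and> P k}" for P and z :: complex
    by (simp add: prod.If_cases Int_def conj_commute)
  have "coord_monomial n a b (phase_mat m c *v \<psi>) =
    (\<Prod>k<n. (if a k = m then cnj c else 1) * (if b k = m then c else 1) * (cnj (\<psi> $ a k) * \<psi> $ b k))"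
    unfolding coord_monomial_def phase_mat_mult_vec by (intro prod.cong) auto
  then show ?thesis
    unfolding coord_monomial_def prod.distrib pow .
qed

lemma obtain_bij_same_pattern:
  fixes a a' :: "'k \<Rightarrow> 'n::finite"
  assumes pattern: "\<forall>k\<in>K. \<forall>l\<in>K. a k = a l \<longleftrightarrow> a' k = a' l"
  obtains p where "bij p" "\<forall>k\<in>K. p (a' k) = a k"
proof -
  define g where "g u = a (SOME k. k \<in> K \<and> a' k = u)" for u
  have g: "g (a' k) = a k" if "k \<in> K" for k
  proof -
    define j where "j = (SOME j. j \<in> K \<and> a' j = a' k)"
    have "j \<in> K \<and> a' j = a' k"
      unfolding j_def by (rule someI[where x = k]) (simp add: that)
    then have "a j = a k"
      using pattern that by blast
    then show ?thesis
      unfolding g_def j_def[symmetric] .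
  qed
  have bij_g: "bij_betw g (a' ` K) (a ` K)"
  proof (rule bij_betw_imageI)
    show "inj_on g (a' ` K)"
    proof (rule inj_onI)
      fix u v
      assume "u \<in> a' ` K" "v \<in> a' ` K" "g u = g v"
      then obtain k l where kl: "k \<in> K" "l \<in> K" "u = a' k" "v = a' l"
        by blast
      then have "a k = a l"
        using g \<open>g u = g v\<close> by simp
      then show "u = v"
        using pattern kl by blast
    qed
    show "g ` a' ` K = a ` K"
      unfolding image_image using g by (simp cong: image_cong)
  qed
  then have "card (UNIV - a' ` K) = card (UNIV - a ` K)"
    by (simp add: card_Diff_subset bij_betw_same_card)
  then obtain h where bij_h: "bij_betw h (UNIV - a' ` K) (UNIV - a ` K)"
    using finite_same_card_bij[OF finite finite] by blast
  define p where "p u = (if u \<in> a' ` K then g u else h u)" for u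
  have "bij_betw p (a' ` K) (a ` K)"
    using bij_g by (rule bij_betw_cong[THEN iffD1, rotated]) (simp add: p_def)
  moreover have "bij_betw p (UNIV - a' ` K) (UNIV - a ` K)"
    using bij_h by (rule bij_betw_cong[THEN iffD1, rotated]) (simp add: p_def)
  ultimately have "bij_betw p (a' ` K \<union> (UNIV - a' ` K)) (a ` K \<union> (UNIV - a ` K))"
    by (rule bij_betw_combine) blast
  then have "bij p"
    by simp
  moreover have "\<forall>k\<in>K. p (a' k) = a k"
    using g unfolding p_def by simp
  ultimately show ?thesis
    using that by blast
qed

context unitarily_invariant_sphere
begin

lemma integral_coord_monomial_no_rearrangement:
  assumes "\<nexists>\<sigma>. \<sigma> permutes {..<n} \<and> (\<forall>k<n. b (\<sigma> k) = a k)"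
  shows "integral\<^sup>L M (coord_monomial n a b) = 0"
proof -
  obtain m where "card {k. k < n \<and> a k = m} \<noteq> card {k. k < n \<and> b k = m}"
    using obtain_count_neq_if_no_rearrangement[OF assms] .
  then show ?thesis
    by (rule integral_eq_0_if_phase_covariant[OF continuous_on_coord_monomial _ coord_monomial_phase_mat])
qed

lemma integral_coord_monomial_same_pattern:
  assumes "\<forall>k<n. \<forall>l<n. a k = a l \<longleftrightarrow> a' k = a' l"
  shows "integral\<^sup>L M (coord_monomial n a a) = integral\<^sup>L M (coord_monomial n a' a')"
proof -
  obtain p where p: "bij p" "\<forall>k\<in>{..<n}. p (a' k) = a k"
    using obtain_bij_same_pattern[of "{..<n}" a a'] assms by auto
  have "coord_monomial n a' a' (perm_mat p *v \<psi>) = coord_monomial n a a \<psi>" for \<psi>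
    unfolding coord_monomial_def perm_mat_mult_vec using p(2) by simp
  then show ?thesis
    using integral_unitary_invariant[OF unitary_perm_mat[OF p(1)] continuous_on_coord_monomial[of n a' a']]
    by simp
qed

end

section \<open>Relations from the Hadamard rotation\<close>

definition sqmod :: "'n \<Rightarrow> complex^'n \<Rightarrow> complex" where
  "sqmod u \<psi> = cnj (\<psi> $ u) * \<psi> $ u"

definition coh :: "'n \<Rightarrow> 'n \<Rightarrow> complex^'n \<Rightarrow> complex" where
  "coh u v \<psi> = cnj (\<psi> $ u) * \<psi> $ v"

lemma continuous_on_sqmod [continuous_intros]: "continuous_on UNIV (sqmod u)"
  unfolding sqmod_def by (intro continuous_intros)

lemma continuous_on_coh [continuous_intros]: "continuous_on UNIV (coh u v)"
  unfolding coh_def by (intro continuous_intros)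

lemma sqmod_phase_mat:
  assumes "cmod c = 1"
  shows "sqmod u (phase_mat m c *v \<psi>) = sqmod u \<psi>"
proof -
  have "cnj (c * z) * (c * z) = (cnj c * c) * (cnj z * z)" for z
    by (simp add: mult_ac)
  moreover have "cnj c * c = 1"
    using assms complex_norm_square[of c] by (simp add: mult.commute)
  ultimately show ?thesis
    unfolding sqmod_def phase_mat_mult_vec by simp
qed

lemma sqmod_hadamard_mat_other:
  "x \<noteq> y \<Longrightarrow> u \<noteq> x \<Longrightarrow> u \<noteq> y \<Longrightarrow> sqmod u (hadamard_mat x y *v \<psi>) = sqmod u \<psi>"
  unfolding sqmod_def by (simp add: hadamard_mat_mult_vec)

locale hadamard_invariant_weight = unitarily_invariant_sphere M for M :: "(complex^'n) measure" +
  fixes x y :: 'n and G :: "complex^'n \<Rightarrow> complex"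
  assumes x_neq_y: "x \<noteq> y"
    and continuous_G: "continuous_on UNIV G"
    and G_hadamard_mat: "\<And>\<psi>. G (hadamard_mat x y *v \<psi>) = G \<psi>"
    and G_phase_mat: "\<And>c \<psi>. cmod c = 1 \<Longrightarrow> G (phase_mat x c *v \<psi>) = G \<psi>"
begin

definition weighted_moment :: "nat \<Rightarrow> nat \<Rightarrow> complex" where
  "weighted_moment \<alpha> \<beta> = (\<integral>\<psi>. sqmod x \<psi> ^ \<alpha> * sqmod y \<psi> ^ \<beta> * G \<psi> \<partial>M)"

definition mean_sqmod :: "complex^'n \<Rightarrow> complex" where
  "mean_sqmod \<psi> = (sqmod x \<psi> + sqmod y \<psi>) / 2"

lemma continuous_on_mean_sqmod [continuous_intros]: "continuous_on UNIV mean_sqmod"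
  unfolding mean_sqmod_def by (intro continuous_intros) auto

lemma integral_unbalanced_coh_eq_0:
  assumes "j \<noteq> l"
  shows "(\<integral>\<psi>. mean_sqmod \<psi> ^ a * coh x y \<psi> ^ j * coh y x \<psi> ^ l * G \<psi> \<partial>M) = 0"
proof (rule integral_eq_0_if_phase_covariant[where m = x])
  show "continuous_on UNIV (\<lambda>\<psi>. mean_sqmod \<psi> ^ a * coh x y \<psi> ^ j * coh y x \<psi> ^ l * G \<psi>)"
    by (intro continuous_intros continuous_G)
  fix c \<psi>
  assume c: "cmod c = 1"
  have "mean_sqmod (phase_mat x c *v \<psi>) = mean_sqmod \<psi>"
    unfolding mean_sqmod_def sqmod_phase_mat[OF c] ..
  moreover have "coh x y (phase_mat x c *v \<psi>) = cnj c * coh x y \<psi>"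
    and "coh y x (phase_mat x c *v \<psi>) = c * coh y x \<psi>"
    using x_neq_y unfolding coh_def phase_mat_mult_vec by auto
  ultimately show "mean_sqmod (phase_mat x c *v \<psi>) ^ a * coh x y (phase_mat x c *v \<psi>) ^ j *
      coh y x (phase_mat x c *v \<psi>) ^ l * G (phase_mat x c *v \<psi>) =
    cnj c ^ j * c ^ l * (mean_sqmod \<psi> ^ a * coh x y \<psi> ^ j * coh y x \<psi> ^ l * G \<psi>)"
    by (simp add: G_phase_mat[OF c] power_mult_distrib mult_ac)
qed (rule assms)

lemma sqmod_hadamard_mat: "sqmod x (hadamard_mat x y *v \<psi>) = mean_sqmod \<psi> + (coh x y \<psi> + coh y x \<psi>) / 2"
proof -
  have "complex_of_real (sqrt 2) * complex_of_real (sqrt 2) = 2"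
    by (simp flip: of_real_mult)
  then show ?thesis
    unfolding sqmod_def coh_def mean_sqmod_def hadamard_mat_mult_vec[OF x_neq_y]
    by (simp add: field_simps)
qed

lemma integral_sqmod_power_hadamard:
  "(\<integral>\<psi>. sqmod x \<psi> ^ n * G \<psi> \<partial>M) =
   (\<Sum>k\<le>n. \<Sum>j\<le>k. of_nat (n choose k) * of_nat (k choose j) / 2 ^ k *
       (\<integral>\<psi>. mean_sqmod \<psi> ^ (n - k) * coh x y \<psi> ^ j * coh y x \<psi> ^ (k - j) * G \<psi> \<partial>M))"
proof -
  have expand: "sqmod x (hadamard_mat x y *v \<psi>) ^ n * G (hadamard_mat x y *v \<psi>) =
      (\<Sum>k\<le>n. \<Sum>j\<le>k. of_nat (n choose k) * of_nat (k choose j) / 2 ^ k *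
        (mean_sqmod \<psi> ^ (n - k) * coh x y \<psi> ^ j * coh y x \<psi> ^ (k - j) * G \<psi>))" for \<psi>
  proof -
    have "sqmod x (hadamard_mat x y *v \<psi>) ^ n = ((coh x y \<psi> + coh y x \<psi>) / 2 + mean_sqmod \<psi>) ^ n"
      unfolding sqmod_hadamard_mat by (simp add: add.commute)
    also have "\<dots> = (\<Sum>k\<le>n. of_nat (n choose k) / 2 ^ k *
        (\<Sum>j\<le>k. of_nat (k choose j) * coh x y \<psi> ^ j * coh y x \<psi> ^ (k - j)) * mean_sqmod \<psi> ^ (n - k))"
      by (simp add: binomial_ring power_divide)
    finally show ?thesis
      unfolding G_hadamard_mat by (simp add: sum_distrib_left sum_distrib_right mult_ac)
  qed
  have "(\<integral>\<psi>. sqmod x \<psi> ^ n * G \<psi> \<partial>M) =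
      (\<integral>\<psi>. sqmod x (hadamard_mat x y *v \<psi>) ^ n * G (hadamard_mat x y *v \<psi>) \<partial>M)"
    by (rule integral_unitary_invariant[symmetric])
       (auto intro!: unitary_hadamard_mat x_neq_y continuous_intros continuous_G)
  moreover have "integrable M (\<lambda>\<psi>. mean_sqmod \<psi> ^ (n - k) * coh x y \<psi> ^ j * coh y x \<psi> ^ (k - j) * G \<psi>)"
    for k j
    by (intro integrable_continuous continuous_intros continuous_G)
  ultimately show ?thesis
    unfolding expand by (simp add: integrable_sum)
qed

lemma integral_balanced_coh:
  "(\<integral>\<psi>. mean_sqmod \<psi> ^ m * coh x y \<psi> ^ j * coh y x \<psi> ^ j * G \<psi> \<partial>M) =
   (\<Sum>i\<le>m. of_nat (m choose i) / 2 ^ m * weighted_moment (i + j) (m - i + j))"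
proof -
  have expand: "mean_sqmod \<psi> ^ m * coh x y \<psi> ^ j * coh y x \<psi> ^ j * G \<psi> =
      (\<Sum>i\<le>m. of_nat (m choose i) / 2 ^ m * (sqmod x \<psi> ^ (i + j) * sqmod y \<psi> ^ (m - i + j) * G \<psi>))" for \<psi>
  proof -
    have "coh x y \<psi> ^ j * coh y x \<psi> ^ j = sqmod x \<psi> ^ j * sqmod y \<psi> ^ j"
      unfolding coh_def sqmod_def by (simp add: power_mult_distrib mult_ac)
    moreover have "mean_sqmod \<psi> ^ m = (\<Sum>i\<le>m. of_nat (m choose i) / 2 ^ m * (sqmod x \<psi> ^ i * sqmod y \<psi> ^ (m - i)))"
      unfolding mean_sqmod_def power_divide binomial_ring by (simp add: sum_divide_distrib mult_ac)
    ultimately have "mean_sqmod \<psi> ^ m * coh x y \<psi> ^ j * coh y x \<psi> ^ j * G \<psi> =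
        (\<Sum>i\<le>m. of_nat (m choose i) / 2 ^ m * (sqmod x \<psi> ^ i * sqmod y \<psi> ^ (m - i))) *
        (sqmod x \<psi> ^ j * sqmod y \<psi> ^ j) * G \<psi>"
      by (simp add: mult.assoc)
    also have "\<dots> = (\<Sum>i\<le>m. of_nat (m choose i) / 2 ^ m *
        (sqmod x \<psi> ^ i * sqmod y \<psi> ^ (m - i)) * (sqmod x \<psi> ^ j * sqmod y \<psi> ^ j) * G \<psi>)"
      by (simp add: sum_distrib_right)
    finally show ?thesis
      by (simp only: power_add mult_ac)
  qed
  have "integrable M (\<lambda>\<psi>. sqmod x \<psi> ^ a * sqmod y \<psi> ^ b * G \<psi>)" for a b
    by (intro integrable_continuous continuous_intros continuous_G)
  then show ?thesis
    unfolding expand weighted_moment_def by simp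
qed

lemma integral_coh_powers:
  "(\<integral>\<psi>. mean_sqmod \<psi> ^ m * coh x y \<psi> ^ j * coh y x \<psi> ^ l * G \<psi> \<partial>M) =
    (if j = l then \<Sum>i\<le>m. of_nat (m choose i) / 2 ^ m * weighted_moment (i + j) (m - i + j) else 0)"
  by (cases "j = l") (simp_all add: integral_unbalanced_coh_eq_0 integral_balanced_coh)

lemma weighted_moment_hadamard:
  "weighted_moment n 0 = (\<Sum>k\<le>n. \<Sum>j\<le>k. of_nat (n choose k) * of_nat (k choose j) / 2 ^ k *
     (if j = k - j
      then \<Sum>i\<le>n - k. of_nat ((n - k) choose i) / 2 ^ (n - k) * weighted_moment (i + j) (n - k - i + j)
      else 0))"
proof -
  have "weighted_moment n 0 = (\<integral>\<psi>. sqmod x \<psi> ^ n * G \<psi> \<partial>M)"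
    unfolding weighted_moment_def by simp
  then show ?thesis
    unfolding integral_sqmod_power_hadamard integral_coh_powers .
qed

lemma weighted_moment_hadamard_2:
  "weighted_moment 2 0 = (weighted_moment 2 0 + 2 * weighted_moment 1 1 + weighted_moment 0 2) / 4
     + 1/2 * weighted_moment 1 1"
  using weighted_moment_hadamard[of 2] by (simp add: atMost_Suc numeral_eq_Suc field_simps)

lemma weighted_moment_hadamard_3:
  "weighted_moment 3 0 = (weighted_moment 3 0 + 3 * weighted_moment 2 1 + 3 * weighted_moment 1 2 + weighted_moment 0 3) / 8
     + 3/4 * (weighted_moment 1 2 + weighted_moment 2 1)"
  using weighted_moment_hadamard[of 3] by (simp add: atMost_Suc numeral_eq_Suc field_simps) algebra

lemma weighted_moment_hadamard_4:
  "weighted_moment 4 0 = (weighted_moment 4 0 + 4 * weighted_moment 3 1 + 6 * weighted_moment 2 2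
       + 4 * weighted_moment 1 3 + weighted_moment 0 4) / 16
     + 3/4 * (weighted_moment 3 1 + 2 * weighted_moment 2 2 + weighted_moment 1 3) + 3/8 * weighted_moment 2 2"
  using weighted_moment_hadamard[of 4] by (simp add: atMost_Suc numeral_eq_Suc field_simps) algebra

end

section \<open>Fourth moments\<close>

lemma all_less_4: "(\<forall>k<4. P k) \<longleftrightarrow> P 0 \<and> P 1 \<and> P 2 \<and> P (3::nat)"
  by (auto simp: less_Suc_eq numeral_eq_Suc)

lemma prod_lessThan_4: "(\<Prod>k<4. f k) = f 0 * f 1 * f 2 * (f (3::nat) :: 'a::comm_monoid_mult)"
  by (simp add: numeral_eq_Suc lessThan_Suc mult_ac)

context unitarily_invariant_sphere
begin

definition moment4 :: "'n \<Rightarrow> 'n \<Rightarrow> 'n \<Rightarrow> 'n \<Rightarrow> complex" where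
  "moment4 p q r s = (\<integral>\<psi>. sqmod p \<psi> * sqmod q \<psi> * sqmod r \<psi> * sqmod s \<psi> \<partial>M)"

lemma moment4_eq_integral_coord_monomial:
  "moment4 (a 0) (a 1) (a 2) (a 3) = integral\<^sup>L M (coord_monomial 4 a a)"
  unfolding moment4_def coord_monomial_def prod_lessThan_4 sqmod_def ..

lemma moment4_same_pattern:
  assumes "p = q \<longleftrightarrow> p' = q'" "p = r \<longleftrightarrow> p' = r'" "p = s \<longleftrightarrow> p' = s'"
    and "q = r \<longleftrightarrow> q' = r'" "q = s \<longleftrightarrow> q' = s'" "r = s \<longleftrightarrow> r' = s'"
  shows "moment4 p q r s = moment4 p' q' r' s'"
  using integral_coord_monomial_same_pattern[of 4 "\<lambda>k. [p, q, r, s] ! k" "\<lambda>k. [p', q', r', s'] ! k"]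
    moment4_eq_integral_coord_monomial[of "\<lambda>k. [p, q, r, s] ! k"]
    moment4_eq_integral_coord_monomial[of "\<lambda>k. [p', q', r', s'] ! k"] assms
  by (auto simp: all_less_4)

lemma moment4_commute:
  "moment4 p q r s = moment4 q p r s"
  "moment4 p q r s = moment4 p r q s"
  "moment4 p q r s = moment4 p q s r"
  unfolding moment4_def by (simp_all add: mult_ac)

end

locale four_coords = unitarily_invariant_sphere M for M :: "(complex^'n) measure" +
  fixes x y z w :: 'n
  assumes distinct_xyzw: "distinct [x, y, z, w]"
begin

lemma coords_neq: "x \<noteq> y" "z \<noteq> x" "z \<noteq> y" "w \<noteq> x" "w \<noteq> y"
  using distinct_xyzw by auto

lemma moment4_pattern_4: "moment4 u u u u = moment4 x x x x"
  by (rule moment4_same_pattern) simp_all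

lemma moment4_pattern_31: "u \<noteq> v \<Longrightarrow> moment4 u u u v = moment4 x x x y"
  using distinct_xyzw by (intro moment4_same_pattern) auto

lemma moment4_pattern_22: "u \<noteq> v \<Longrightarrow> moment4 u u v v = moment4 x x y y"
  using distinct_xyzw by (intro moment4_same_pattern) auto

lemma moment4_pattern_211: "u \<noteq> v \<Longrightarrow> u \<noteq> t \<Longrightarrow> v \<noteq> t \<Longrightarrow> moment4 u u v t = moment4 x x y z"
  using distinct_xyzw by (intro moment4_same_pattern) auto

lemma moment4_relation_4:
  "moment4 x x x x = (2 * moment4 x x x x + 8 * moment4 x x x y + 6 * moment4 x x y y) / 16
     + 3/4 * (2 * moment4 x x x y + 2 * moment4 x x y y) + 3/8 * moment4 x x y y"
proof -
  interpret H: hadamard_invariant_weight M x y "\<lambda>_. 1"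
    by unfold_locales (simp_all add: coords_neq)
  have "H.weighted_moment a b = (\<integral>\<psi>. sqmod x \<psi> ^ a * sqmod y \<psi> ^ b \<partial>M)" for a b
    unfolding H.weighted_moment_def by simp
  then have "H.weighted_moment 4 0 = moment4 x x x x" "H.weighted_moment 3 1 = moment4 x x x y"
    "H.weighted_moment 2 2 = moment4 x x y y" "H.weighted_moment 1 3 = moment4 y y y x"
    "H.weighted_moment 0 4 = moment4 y y y y"
    unfolding moment4_def by (simp_all add: eval_nat_numeral mult_ac)
  moreover have "moment4 y y y x = moment4 x x x y" "moment4 y y y y = moment4 x x x x"
    using distinct_xyzw by (auto intro: moment4_pattern_31 moment4_pattern_4)
  ultimately show ?thesis
    using H.weighted_moment_hadamard_4 by (simp add: algebra_simps)
qed

lemma moment4_relation_31: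
  "moment4 x x x y = (2 * moment4 x x x y + 6 * moment4 x x y z) / 8 + 3/4 * (2 * moment4 x x y z)"
proof -
  interpret H: hadamard_invariant_weight M x y "sqmod z"
    by unfold_locales (simp_all add: coords_neq sqmod_hadamard_mat_other sqmod_phase_mat
      continuous_on_sqmod continuous_on_power continuous_on_mult)
  have "H.weighted_moment a b = (\<integral>\<psi>. sqmod x \<psi> ^ a * sqmod y \<psi> ^ b * sqmod z \<psi> \<partial>M)" for a b
    unfolding H.weighted_moment_def by simp
  then have "H.weighted_moment 3 0 = moment4 x x x z" "H.weighted_moment 2 1 = moment4 x x y z"
    "H.weighted_moment 1 2 = moment4 y y x z" "H.weighted_moment 0 3 = moment4 y y y z"
    unfolding moment4_def by (simp_all add: eval_nat_numeral mult_ac)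
  moreover have "moment4 x x x z = moment4 x x x y" "moment4 y y x z = moment4 x x y z"
    "moment4 y y y z = moment4 x x x y"
    using distinct_xyzw by (auto intro: moment4_pattern_31 moment4_pattern_211)
  ultimately show ?thesis
    using H.weighted_moment_hadamard_3 by (simp add: algebra_simps)
qed

lemma moment4_relation_22:
  "moment4 x x y y = (2 * moment4 x x y y + 2 * moment4 x x y z) / 4 + 1/2 * moment4 x x y z"
proof -
  interpret H: hadamard_invariant_weight M x y "\<lambda>\<psi>. sqmod z \<psi> ^ 2"
    by unfold_locales (simp_all add: coords_neq sqmod_hadamard_mat_other sqmod_phase_mat
      continuous_on_sqmod continuous_on_power continuous_on_mult)
  have "H.weighted_moment a b = (\<integral>\<psi>. sqmod x \<psi> ^ a * sqmod y \<psi> ^ b * sqmod z \<psi> ^ 2 \<partial>M)" for a b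
    unfolding H.weighted_moment_def by simp
  then have "H.weighted_moment 2 0 = moment4 x x z z" "H.weighted_moment 1 1 = moment4 z z x y"
    "H.weighted_moment 0 2 = moment4 y y z z"
    unfolding moment4_def by (simp_all add: eval_nat_numeral mult_ac)
  moreover have "moment4 x x z z = moment4 x x y y" "moment4 z z x y = moment4 x x y z"
    "moment4 y y z z = moment4 x x y y"
    using distinct_xyzw by (auto intro: moment4_pattern_22 moment4_pattern_211)
  ultimately show ?thesis
    using H.weighted_moment_hadamard_2 by (simp add: algebra_simps)
qed

lemma moment4_relation_211:
  "moment4 x x y z = (2 * moment4 x x y z + 2 * moment4 x y z w) / 4 + 1/2 * moment4 x y z w"
proof -
  interpret H: hadamard_invariant_weight M x y "\<lambda>\<psi>. sqmod z \<psi> * sqmod w \<psi>"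
    by unfold_locales (simp_all add: coords_neq sqmod_hadamard_mat_other sqmod_phase_mat
      continuous_on_sqmod continuous_on_power continuous_on_mult)
  have "H.weighted_moment a b = (\<integral>\<psi>. sqmod x \<psi> ^ a * sqmod y \<psi> ^ b * (sqmod z \<psi> * sqmod w \<psi>) \<partial>M)" for a b
    unfolding H.weighted_moment_def by simp
  then have "H.weighted_moment 2 0 = moment4 x x z w" "H.weighted_moment 1 1 = moment4 x y z w"
    "H.weighted_moment 0 2 = moment4 y y z w"
    unfolding moment4_def by (simp_all add: eval_nat_numeral mult_ac)
  moreover have "moment4 x x z w = moment4 x x y z" "moment4 y y z w = moment4 x x y z"
    using distinct_xyzw by (auto intro: moment4_pattern_211)
  ultimately show ?thesis
    using H.weighted_moment_hadamard_2 by (simp add: algebra_simps)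
qed

lemma moment4_canonical_values:
  "moment4 x x y z = 2 * moment4 x y z w" "moment4 x x y y = 4 * moment4 x y z w"
  "moment4 x x x y = 6 * moment4 x y z w" "moment4 x x x x = 24 * moment4 x y z w"
  using moment4_relation_211 moment4_relation_22 moment4_relation_31 moment4_relation_4
  by algebra+

end

definition perm4_of_list :: "nat list \<Rightarrow> nat \<Rightarrow> nat" where
  "perm4_of_list xs k = (if k < 4 then xs ! k else k)"

definition perms4_lists :: "nat list list" where
  "perms4_lists =
    [[0,1,2,3], [0,1,3,2], [0,2,1,3], [0,2,3,1], [0,3,1,2], [0,3,2,1],
     [1,0,2,3], [1,0,3,2], [1,2,0,3], [1,2,3,0], [1,3,0,2], [1,3,2,0],
     [2,0,1,3], [2,0,3,1], [2,1,0,3], [2,1,3,0], [2,3,0,1], [2,3,1,0],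
     [3,0,1,2], [3,0,2,1], [3,1,0,2], [3,1,2,0], [3,2,0,1], [3,2,1,0]]"

lemma distinct_perms4_lists: "distinct perms4_lists"
  unfolding perms4_lists_def by simp

lemma perms4_lists_D:
  assumes "xs \<in> set perms4_lists"
  shows "length xs = 4" "distinct xs" "set xs = {..<4}"
proof -
  have "list_all (\<lambda>xs. length xs = 4 \<and> distinct xs \<and> list_all (\<lambda>k. k < 4) xs) perms4_lists"
    unfolding perms4_lists_def by simp
  then have xs: "length xs = 4" "distinct xs" "set xs \<subseteq> {..<4}"
    using assms by (auto simp: list_all_iff)
  then show "length xs = 4" "distinct xs"
    by simp_all
  have "card (set xs) = card {..<4::nat}"
    using xs distinct_card[OF xs(2)] by simp
  then show "set xs = {..<4}"
    using xs(3) by (simp add: card_subset_eq)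
qed

lemma perm4_of_list_permutes:
  assumes "xs \<in> set perms4_lists"
  shows "perm4_of_list xs permutes {..<4}"
proof (rule bij_imp_permutes)
  note xs = perms4_lists_D[OF assms]
  show "bij_betw (perm4_of_list xs) {..<4} {..<4}"
  proof (rule bij_betw_imageI)
    show "inj_on (perm4_of_list xs) {..<4}"
      unfolding inj_on_def perm4_of_list_def using xs by (simp add: nth_eq_iff_index_eq)
    have "perm4_of_list xs ` {..<4} = (\<lambda>k. xs ! k) ` {..<length xs}"
      unfolding perm4_of_list_def using xs by simp
    also have "\<dots> = set xs"
      by (metis atLeast_upt image_set map_nth set_map)
    finally show "perm4_of_list xs ` {..<4} = {..<4}"
      using xs by simp
  qed
qed (simp add: perm4_of_list_def)

lemma inj_on_perm4_of_list: "inj_on perm4_of_list (set perms4_lists)"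
proof (rule inj_onI)
  fix xs ys
  assume xs: "xs \<in> set perms4_lists" and ys: "ys \<in> set perms4_lists"
    and eq: "perm4_of_list xs = perm4_of_list ys"
  have "xs ! k = ys ! k" if "k < 4" for k
    using fun_cong[OF eq, of k] that by (simp add: perm4_of_list_def)
  then show "xs = ys"
    using perms4_lists_D[OF xs] perms4_lists_D[OF ys] by (metis nth_equalityI)
qed

lemma permutations_4_eq: "{\<sigma>. \<sigma> permutes {..<4::nat}} = perm4_of_list ` set perms4_lists"
proof -
  have "card (perm4_of_list ` set perms4_lists) = length perms4_lists"
    using card_image[OF inj_on_perm4_of_list] distinct_card[OF distinct_perms4_lists] by simp
  also have "\<dots> = card {\<sigma>. \<sigma> permutes {..<4::nat}}"
    by (simp add: card_permutations perms4_lists_def fact_numeral)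
  finally show ?thesis
    using perm4_of_list_permutes
    by (intro card_subset_eq[symmetric]) (auto simp: finite_permutations)
qed

lemma sum_permutations_4:
  "(\<Sum>\<sigma>\<in>{\<sigma>. \<sigma> permutes {..<4::nat}}. f \<sigma>) = (\<Sum>xs\<leftarrow>perms4_lists. f (perm4_of_list xs))"
  unfolding permutations_4_eq sum.reindex[OF inj_on_perm4_of_list] o_def
  by (rule sum.distinct_set_conv_list[OF distinct_perms4_lists])

lemma of_nat_wick_count:
  "of_nat (wick_count n a b) = (\<Sum>\<sigma>\<in>{\<sigma>. \<sigma> permutes {..<n}}. of_bool (\<forall>k<n. b (\<sigma> k) = a k))"
  by (simp add: wick_count_def finite_permutations Int_def)

lemma wick_count_4:
  "wick_count 4 a b =
    (\<Sum>xs\<leftarrow>perms4_lists. of_bool (b (xs ! 0) = a 0 \<and> b (xs ! 1) = a 1 \<and> b (xs ! 2) = a 2 \<and> b (xs ! 3) = a 3))"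
  using of_nat_wick_count[of 4 a b, where 'a = nat]
  unfolding sum_permutations_4 all_less_4 by (simp add: perm4_of_list_def)

context four_coords
begin

lemma moment4_values:
  shows "moment4 u u u u = 24 * moment4 x y z w"
    and "u \<noteq> v \<Longrightarrow> moment4 u u u v = 6 * moment4 x y z w"
    and "u \<noteq> v \<Longrightarrow> moment4 u v v v = 6 * moment4 x y z w"
    and "u \<noteq> v \<Longrightarrow> moment4 u u v v = 4 * moment4 x y z w"
    and "u \<noteq> v \<Longrightarrow> u \<noteq> t \<Longrightarrow> v \<noteq> t \<Longrightarrow> moment4 u u v t = 2 * moment4 x y z w"
    and "u \<noteq> v \<Longrightarrow> u \<noteq> t \<Longrightarrow> v \<noteq> t \<Longrightarrow> moment4 u v v t = 2 * moment4 x y z w"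
    and "u \<noteq> v \<Longrightarrow> u \<noteq> t \<Longrightarrow> v \<noteq> t \<Longrightarrow> moment4 u v t t = 2 * moment4 x y z w"
    and "distinct [p, q, r, s] \<Longrightarrow> moment4 p q r s = moment4 x y z w"
proof -
  have rotate: "moment4 p q r s = moment4 q r s p" for p q r s
    unfolding moment4_def by (simp add: mult_ac)
  show "moment4 u u u u = 24 * moment4 x y z w"
    using moment4_pattern_4 moment4_canonical_values by simp
  show "moment4 u u u v = 6 * moment4 x y z w" if "u \<noteq> v"
    using moment4_pattern_31[OF that] moment4_canonical_values by simp
  show "moment4 u v v v = 6 * moment4 x y z w" if "u \<noteq> v"
    using rotate[of u v v v] moment4_pattern_31[of v u] that moment4_canonical_values by simp
  show "moment4 u u v v = 4 * moment4 x y z w" if "u \<noteq> v"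
    using moment4_pattern_22[OF that] moment4_canonical_values by simp
  show "moment4 u u v t = 2 * moment4 x y z w" if "u \<noteq> v" "u \<noteq> t" "v \<noteq> t"
    using moment4_pattern_211[OF that] moment4_canonical_values by simp
  show "moment4 u v v t = 2 * moment4 x y z w" if "u \<noteq> v" "u \<noteq> t" "v \<noteq> t"
    using rotate[of u v v t] moment4_commute(3)[of v v t u] moment4_pattern_211[of v u t] that
      moment4_canonical_values by simp
  show "moment4 u v t t = 2 * moment4 x y z w" if "u \<noteq> v" "u \<noteq> t" "v \<noteq> t"
    using rotate[of u v t t] rotate[of v t t u] moment4_pattern_211[of t u v] that
      moment4_canonical_values by simp
  show "moment4 p q r s = moment4 x y z w" if "distinct [p, q, r, s]"
    using that distinct_xyzw by (intro moment4_same_pattern) auto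
qed

text \<open>In each of the 64 cases simp sorts the arguments by ordered rewriting with the commutation
  rules, and the reorientation rules keep the remaining inequalities in the same order, so that
  one of the forms of the previous lemma applies.\<close>

lemma moment4_eq_wick_count:
  "moment4 (a 0) (a 1) (a 2) (a 3) = moment4 x y z w * of_nat (wick_count 4 a a)"
  unfolding wick_count_4 perms4_lists_def
  by (cases "a 0 = a 1"; cases "a 0 = a 2"; cases "a 0 = a 3"; cases "a 1 = a 2"; cases "a 1 = a 3";
      cases "a 2 = a 3")
     (simp_all add: moment4_values moment4_commute eq_commute[of "a 1" "a 0"] eq_commute[of "a 2" "a 0"]
       eq_commute[of "a 3" "a 0"] eq_commute[of "a 2" "a 1"] eq_commute[of "a 3" "a 1"] eq_commute[of "a 3" "a 2"])

lemma integral_coord_monomial_4: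
  "integral\<^sup>L M (coord_monomial 4 a b) = moment4 x y z w * of_nat (wick_count 4 a b)"
proof (cases "\<exists>\<sigma>. \<sigma> permutes {..<4} \<and> (\<forall>k<4. b (\<sigma> k) = a k)")
  case True
  then obtain \<sigma> where "\<sigma> permutes {..<4}" "\<forall>k<4. b (\<sigma> k) = a k"
    by blast
  then show ?thesis
    using moment4_eq_wick_count[of a] moment4_eq_integral_coord_monomial[of a]
    by (simp add: coord_monomial_rearrange wick_count_rearrange)
next
  case False
  then have "{\<sigma>. \<sigma> permutes {..<4} \<and> (\<forall>k<4. b (\<sigma> k) = a k)} = {}"
    by blast
  then have "wick_count 4 a b = 0"
    unfolding wick_count_def by (simp only: card.empty)
  then show ?thesis
    using integral_coord_monomial_no_rearrangement[OF False] by simp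
qed

end

section \<open>The Wick formula for four quadratic forms\<close>

text \<open>The contraction along \<open>\<sigma>\<close> is a product of traces, one for each cycle of \<open>\<sigma>\<close>.\<close>

definition contraction :: "(nat \<Rightarrow> nat) \<Rightarrow> (complex^'n^'n) list \<Rightarrow> complex" where
  "contraction \<sigma> Ms = (\<Sum>b\<in>PiE {..<4} (\<lambda>_. UNIV). \<Prod>k<4. Ms ! k $ b (\<sigma> k) $ b k)"

lemma prod_braket_expand:
  "(\<Prod>k<4. braket \<psi> (Ms ! k)) =
    (\<Sum>g\<in>PiE {..<4} (\<lambda>_. UNIV). (\<Prod>k<4. Ms ! k $ fst (g k) $ snd (g k)) *
      coord_monomial 4 (\<lambda>k. fst (g k)) (\<lambda>k. snd (g k)) \<psi>)"
proof -
  have pairs: "braket \<psi> A = (\<Sum>ab\<in>UNIV. cnj (\<psi> $ fst ab) * A $ fst ab $ snd ab * \<psi> $ snd ab)" for A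
    unfolding braket_expand sum.cartesian_product UNIV_Times_UNIV[symmetric] by (simp add: case_prod_beta)
  have "(\<Prod>k<4. braket \<psi> (Ms ! k)) = (\<Sum>g\<in>PiE {..<4} (\<lambda>_. UNIV).
      \<Prod>k<4. cnj (\<psi> $ fst (g k)) * Ms ! k $ fst (g k) $ snd (g k) * \<psi> $ snd (g k))"
    unfolding pairs by (rule prod_sum_PiE) auto
  then show ?thesis
    unfolding coord_monomial_def prod.distrib[symmetric] by (simp add: mult_ac)
qed

lemma sum_pairings_eq_contraction:
  assumes \<sigma>: "\<sigma> permutes {..<4}"
  shows "(\<Sum>g\<in>PiE {..<4} (\<lambda>_. UNIV::('n::finite \<times> 'n) set). (\<Prod>k<4. Ms ! k $ fst (g k) $ snd (g k)) *
      of_bool (\<forall>k<4. snd (g (\<sigma> k)) = fst (g k))) = contraction \<sigma> Ms"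
proof -
  have \<sigma>_range: "\<sigma> k < 4" if "k < 4" for k
    using permutes_in_image[OF \<sigma>, of k] that by simp
  let ?G = "PiE {..<4} (\<lambda>_. UNIV::('n \<times> 'n) set) \<inter> {g. \<forall>k<4. snd (g (\<sigma> k)) = fst (g k)}"
  have "(\<Sum>g\<in>?G. \<Prod>k<4. Ms ! k $ fst (g k) $ snd (g k)) = contraction \<sigma> Ms"
    unfolding contraction_def
  proof (rule sum.reindex_bij_witness[where i = "\<lambda>b k. if k < 4 then (b (\<sigma> k), b k) else undefined"
                                        and j = "\<lambda>g. restrict (\<lambda>k. snd (g k)) {..<4}"])
    fix g
    assume g: "g \<in> ?G"
    show "(\<lambda>k. if k < 4 then (restrict (\<lambda>k. snd (g k)) {..<4} (\<sigma> k), restrict (\<lambda>k. snd (g k)) {..<4} k)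
        else undefined) = g"
      using g \<sigma>_range by (auto simp: PiE_def extensional_def prod_eq_iff fun_eq_iff)
    show "restrict (\<lambda>k. snd (g k)) {..<4} \<in> PiE {..<4} (\<lambda>_. UNIV)"
      by auto
    show "(\<Prod>k<4. Ms ! k $ restrict (\<lambda>k. snd (g k)) {..<4} (\<sigma> k) $ restrict (\<lambda>k. snd (g k)) {..<4} k) =
        (\<Prod>k<4. Ms ! k $ fst (g k) $ snd (g k))"
      using g \<sigma>_range by (intro prod.cong) auto
  next
    fix b :: "nat \<Rightarrow> 'n"
    assume "b \<in> PiE {..<4} (\<lambda>_. UNIV)"
    then show "restrict (\<lambda>k. snd (if k < 4 then (b (\<sigma> k), b k) else undefined)) {..<4} = b"
      by (auto simp: PiE_def extensional_def fun_eq_iff)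
    show "(\<lambda>k. if k < 4 then (b (\<sigma> k), b k) else undefined) \<in> ?G"
      using \<sigma>_range by (auto simp: PiE_def extensional_def)
  qed
  moreover have "finite (PiE {..<4::nat} (\<lambda>_. UNIV::('n \<times> 'n) set))"
    by (simp add: finite_PiE)
  ultimately show ?thesis
    by (simp add: Int_def)
qed

context four_coords
begin

theorem integral_prod_braket:
  "(\<integral>\<psi>. (\<Prod>k<4. braket \<psi> (Ms ! k)) \<partial>M) =
    moment4 x y z w * (\<Sum>\<sigma>\<in>{\<sigma>. \<sigma> permutes {..<4}}. contraction \<sigma> Ms)"
proof -
  let ?P = "{\<sigma>. \<sigma> permutes {..<4::nat}}"
  let ?c = "\<lambda>g. \<Prod>k<4. Ms ! k $ fst (g k) $ snd (g k)"
  have "(\<integral>\<psi>. (\<Prod>k<4. braket \<psi> (Ms ! k)) \<partial>M) = (\<Sum>g\<in>PiE {..<4} (\<lambda>_. UNIV).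
      ?c g * integral\<^sup>L M (coord_monomial 4 (\<lambda>k. fst (g k)) (\<lambda>k. snd (g k))))"
    unfolding prod_braket_expand
    by (simp add: integrable_continuous continuous_on_coord_monomial)
  also have "\<dots> = moment4 x y z w * (\<Sum>\<sigma>\<in>?P. \<Sum>g\<in>PiE {..<4} (\<lambda>_. UNIV).
      ?c g * of_bool (\<forall>k<4. snd (g (\<sigma> k)) = fst (g k)))"
    unfolding integral_coord_monomial_4 of_nat_wick_count sum_distrib_left
    by (subst sum.swap) (simp add: mult_ac)
  also have "\<dots> = moment4 x y z w * (\<Sum>\<sigma>\<in>?P. contraction \<sigma> Ms)"
    by (simp add: sum_pairings_eq_contraction)
  finally show ?thesis .
qed

end

lemma sum_PiE_4:
  "(\<Sum>b\<in>PiE {..<4::nat} (\<lambda>_. UNIV::'n::finite set). F b) =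
    (\<Sum>v0\<in>UNIV. \<Sum>v1\<in>UNIV. \<Sum>v2\<in>UNIV. \<Sum>v3\<in>UNIV. F (restrict (\<lambda>k. [v0, v1, v2, v3] ! k) {..<4}))"
proof -
  let ?tuple = "\<lambda>(v0, v1, v2, v3). restrict (\<lambda>k. [v0, v1, v2, v3] ! k) {..<4::nat}"
  have "(\<Sum>v0\<in>UNIV. \<Sum>v1\<in>UNIV. \<Sum>v2\<in>UNIV. \<Sum>v3\<in>UNIV. F (restrict (\<lambda>k. [v0, v1, v2, v3] ! k) {..<4})) =
      (\<Sum>v\<in>(UNIV::'n set) \<times> UNIV \<times> UNIV \<times> UNIV. F (?tuple v))"
    by (simp add: sum.cartesian_product case_prod_beta)
  also have "\<dots> = (\<Sum>b\<in>PiE {..<4::nat} (\<lambda>_. UNIV::'n set). F b)"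
  proof (rule sum.reindex_bij_witness[where i = "\<lambda>b. (b 0, b 1, b 2, b 3)" and j = ?tuple])
    fix v :: "'n \<times> 'n \<times> 'n \<times> 'n"
    obtain v0 v1 v2 v3 where v: "v = (v0, v1, v2, v3)"
      by (cases v) auto
    show "(\<lambda>b. (b 0, b 1, b 2, b 3)) (?tuple v) = v" "?tuple v \<in> PiE {..<4} (\<lambda>_. UNIV)"
      unfolding v by simp_all
  next
    fix b :: "nat \<Rightarrow> 'n"
    assume b: "b \<in> PiE {..<4} (\<lambda>_. UNIV)"
    have "?tuple (b 0, b 1, b 2, b 3) k = b k" for k
    proof (cases "k < 4")
      case True
      then have "k = 0 \<or> k = 1 \<or> k = 2 \<or> k = 3"
        by auto
      then show ?thesis
        by auto
    qed (use b in \<open>auto simp: PiE_def extensional_def\<close>)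
    then show "?tuple (b 0, b 1, b 2, b 3) = b"
      by blast
  qed simp_all
  finally show ?thesis ..
qed

text \<open>Relabelling the summation indices by a second permutation brings a contraction into the
  shape of a product of traces.\<close>

lemma contraction_relabel:
  assumes "xs \<in> set perms4_lists" "ys \<in> set perms4_lists"
  shows "contraction (perm4_of_list xs) Ms = (\<Sum>v0\<in>UNIV. \<Sum>v1\<in>UNIV. \<Sum>v2\<in>UNIV. \<Sum>v3\<in>UNIV.
    \<Prod>k<4. Ms ! k $ [v0, v1, v2, v3] ! perm4_of_list ys (perm4_of_list xs k) $ [v0, v1, v2, v3] ! perm4_of_list ys k)"
proof -
  let ?\<sigma> = "perm4_of_list xs" and ?\<pi> = "perm4_of_list ys"
  have \<pi>: "?\<pi> permutes {..<4}"
    using perm4_of_list_permutes[OF assms(2)] .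
  have range: "p k < 4" if "p permutes {..<4}" "k < 4" for p k
    using permutes_in_image[OF that(1), of k] that(2) by simp
  note ranges = range[OF perm4_of_list_permutes[OF assms(1)]] range[OF \<pi>] range[OF permutes_inv[OF \<pi>]]
  have "contraction ?\<sigma> Ms = (\<Sum>b\<in>PiE {..<4} (\<lambda>_. UNIV). \<Prod>k<4. Ms ! k $ b (?\<pi> (?\<sigma> k)) $ b (?\<pi> k))"
    unfolding contraction_def
  proof (rule sum.reindex_bij_witness[where j = "\<lambda>b. restrict (b \<circ> inv ?\<pi>) {..<4}"
        and i = "\<lambda>b. restrict (b \<circ> ?\<pi>) {..<4}"])
    fix b :: "nat \<Rightarrow> 'a"
    assume b: "b \<in> PiE {..<4} (\<lambda>_. UNIV)"
    show "restrict (restrict (b \<circ> inv ?\<pi>) {..<4} \<circ> ?\<pi>) {..<4} = b"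
      using b permutes_inverses(2)[OF \<pi>] ranges by (auto simp: PiE_def extensional_def fun_eq_iff)
    show "(\<Prod>k<4. Ms ! k $ restrict (b \<circ> inv ?\<pi>) {..<4} (?\<pi> (?\<sigma> k)) $ restrict (b \<circ> inv ?\<pi>) {..<4} (?\<pi> k)) =
        (\<Prod>k<4. Ms ! k $ b (?\<sigma> k) $ b k)"
      using permutes_inverses(2)[OF \<pi>] ranges by (intro prod.cong) auto
    show "restrict (restrict (b \<circ> ?\<pi>) {..<4} \<circ> inv ?\<pi>) {..<4} = b"
      using b permutes_inverses(1)[OF \<pi>] ranges by (auto simp: PiE_def extensional_def fun_eq_iff)
  qed auto
  also have "\<dots> = (\<Sum>v0\<in>UNIV. \<Sum>v1\<in>UNIV. \<Sum>v2\<in>UNIV. \<Sum>v3\<in>UNIV.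
      \<Prod>k<4. Ms ! k $ [v0, v1, v2, v3] ! ?\<pi> (?\<sigma> k) $ [v0, v1, v2, v3] ! ?\<pi> k)"
    unfolding sum_PiE_4 using ranges by (intro sum.cong refl prod.cong) auto
  finally show ?thesis .
qed

lemma ctrace_products_expand:
  "ctrace A * ctrace B * ctrace C * ctrace D =
    (\<Sum>i\<in>UNIV. \<Sum>j\<in>UNIV. \<Sum>k\<in>UNIV. \<Sum>l\<in>UNIV. A $ i $ i * B $ j $ j * C $ k $ k * D $ l $ l)"
  "ctrace (A ** B) * ctrace C * ctrace D =
    (\<Sum>i\<in>UNIV. \<Sum>j\<in>UNIV. \<Sum>k\<in>UNIV. \<Sum>l\<in>UNIV. A $ i $ j * B $ j $ i * C $ k $ k * D $ l $ l)"
  "ctrace (A ** B) * ctrace (C ** D) =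
    (\<Sum>i\<in>UNIV. \<Sum>j\<in>UNIV. \<Sum>k\<in>UNIV. \<Sum>l\<in>UNIV. A $ i $ j * B $ j $ i * C $ k $ l * D $ l $ k)"
  "ctrace (A ** (B ** C)) * ctrace D =
    (\<Sum>i\<in>UNIV. \<Sum>j\<in>UNIV. \<Sum>k\<in>UNIV. \<Sum>l\<in>UNIV. A $ i $ j * B $ j $ k * C $ k $ i * D $ l $ l)"
  "ctrace (A ** (B ** (C ** D))) =
    (\<Sum>i\<in>UNIV. \<Sum>j\<in>UNIV. \<Sum>k\<in>UNIV. \<Sum>l\<in>UNIV. A $ i $ j * B $ j $ k * C $ k $ l * D $ l $ i)"
  unfolding ctrace_def matrix_matrix_mult_def
     apply (simp add: sum_distrib_left sum_distrib_right mult_ac, rule sum.swap)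
    apply (simp add: sum_distrib_left sum_distrib_right mult_ac)
   apply (simp only: vec_lambda_beta sum_distrib_right, simp only: sum_distrib_left mult.assoc)
  apply (simp_all add: sum_distrib_left sum_distrib_right mult_ac)
  done

lemma contraction_0123:
  "contraction (perm4_of_list [0,1,2,3]) [A, B, C, D] = ctrace A * ctrace B * ctrace C * ctrace D"
  unfolding ctrace_products_expand(1)
  by (subst contraction_relabel[of "[0,1,2,3]" "[0,1,2,3]"])
    (simp_all add: perms4_lists_def perm4_of_list_def prod_lessThan_4 mult_ac)

lemma contraction_0132:
  "contraction (perm4_of_list [0,1,3,2]) [A, B, C, D] = ctrace (C ** D) * ctrace A * ctrace B"
  unfolding ctrace_products_expand(2)
  by (subst contraction_relabel[of "[0,1,3,2]" "[2,3,1,0]"])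
    (simp_all add: perms4_lists_def perm4_of_list_def prod_lessThan_4 mult_ac)

lemma contraction_0213:
  "contraction (perm4_of_list [0,2,1,3]) [A, B, C, D] = ctrace (B ** C) * ctrace A * ctrace D"
  unfolding ctrace_products_expand(2)
  by (subst contraction_relabel[of "[0,2,1,3]" "[2,1,0,3]"])
    (simp_all add: perms4_lists_def perm4_of_list_def prod_lessThan_4 mult_ac)

lemma contraction_0231:
  "contraction (perm4_of_list [0,2,3,1]) [A, B, C, D] = ctrace (B ** (D ** C)) * ctrace A"
  unfolding ctrace_products_expand(4)
  by (subst contraction_relabel[of "[0,2,3,1]" "[3,1,0,2]"])
    (simp_all add: perms4_lists_def perm4_of_list_def prod_lessThan_4 mult_ac)

lemma contraction_0312:
  "contraction (perm4_of_list [0,3,1,2]) [A, B, C, D] = ctrace (B ** (C ** D)) * ctrace A"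
  unfolding ctrace_products_expand(4)
  by (subst contraction_relabel[of "[0,3,1,2]" "[3,1,2,0]"])
    (simp_all add: perms4_lists_def perm4_of_list_def prod_lessThan_4 mult_ac)

lemma contraction_0321:
  "contraction (perm4_of_list [0,3,2,1]) [A, B, C, D] = ctrace (B ** D) * ctrace A * ctrace C"
  unfolding ctrace_products_expand(2)
  by (subst contraction_relabel[of "[0,3,2,1]" "[2,1,3,0]"])
    (simp_all add: perms4_lists_def perm4_of_list_def prod_lessThan_4 mult_ac)

lemma contraction_1023:
  "contraction (perm4_of_list [1,0,2,3]) [A, B, C, D] = ctrace (A ** B) * ctrace C * ctrace D"
  unfolding ctrace_products_expand(2)
  by (subst contraction_relabel[of "[1,0,2,3]" "[1,0,2,3]"])
    (simp_all add: perms4_lists_def perm4_of_list_def prod_lessThan_4 mult_ac)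

lemma contraction_1032:
  "contraction (perm4_of_list [1,0,3,2]) [A, B, C, D] = ctrace (A ** B) * ctrace (C ** D)"
  unfolding ctrace_products_expand(3)
  by (subst contraction_relabel[of "[1,0,3,2]" "[1,0,3,2]"])
    (simp_all add: perms4_lists_def perm4_of_list_def prod_lessThan_4 mult_ac)

lemma contraction_1203:
  "contraction (perm4_of_list [1,2,0,3]) [A, B, C, D] = ctrace (A ** (C ** B)) * ctrace D"
  unfolding ctrace_products_expand(4)
  by (subst contraction_relabel[of "[1,2,0,3]" "[1,0,2,3]"])
    (simp_all add: perms4_lists_def perm4_of_list_def prod_lessThan_4 mult_ac)

lemma contraction_1230:
  "contraction (perm4_of_list [1,2,3,0]) [A, B, C, D] = ctrace (A ** (D ** (C ** B)))"
  unfolding ctrace_products_expand(5)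
  by (subst contraction_relabel[of "[1,2,3,0]" "[1,0,3,2]"])
    (simp_all add: perms4_lists_def perm4_of_list_def prod_lessThan_4 mult_ac)

lemma contraction_1302:
  "contraction (perm4_of_list [1,3,0,2]) [A, B, C, D] = ctrace (A ** (C ** (D ** B)))"
  unfolding ctrace_products_expand(5)
  by (subst contraction_relabel[of "[1,3,0,2]" "[1,0,2,3]"])
    (simp_all add: perms4_lists_def perm4_of_list_def prod_lessThan_4 mult_ac)

lemma contraction_1320:
  "contraction (perm4_of_list [1,3,2,0]) [A, B, C, D] = ctrace (A ** (D ** B)) * ctrace C"
  unfolding ctrace_products_expand(4)
  by (subst contraction_relabel[of "[1,3,2,0]" "[1,0,3,2]"])
    (simp_all add: perms4_lists_def perm4_of_list_def prod_lessThan_4 mult_ac)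

lemma contraction_2013:
  "contraction (perm4_of_list [2,0,1,3]) [A, B, C, D] = ctrace (A ** (B ** C)) * ctrace D"
  unfolding ctrace_products_expand(4)
  by (subst contraction_relabel[of "[2,0,1,3]" "[1,2,0,3]"])
    (simp_all add: perms4_lists_def perm4_of_list_def prod_lessThan_4 mult_ac)

lemma contraction_2031:
  "contraction (perm4_of_list [2,0,3,1]) [A, B, C, D] = ctrace (A ** (B ** (D ** C)))"
  unfolding ctrace_products_expand(5)
  by (subst contraction_relabel[of "[2,0,3,1]" "[1,2,0,3]"])
    (simp_all add: perms4_lists_def perm4_of_list_def prod_lessThan_4 mult_ac)

lemma contraction_2103:
  "contraction (perm4_of_list [2,1,0,3]) [A, B, C, D] = ctrace (A ** C) * ctrace B * ctrace D"
  unfolding ctrace_products_expand(2)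
  by (subst contraction_relabel[of "[2,1,0,3]" "[1,2,0,3]"])
    (simp_all add: perms4_lists_def perm4_of_list_def prod_lessThan_4 mult_ac)

lemma contraction_2130:
  "contraction (perm4_of_list [2,1,3,0]) [A, B, C, D] = ctrace (A ** (D ** C)) * ctrace B"
  unfolding ctrace_products_expand(4)
  by (subst contraction_relabel[of "[2,1,3,0]" "[1,3,0,2]"])
    (simp_all add: perms4_lists_def perm4_of_list_def prod_lessThan_4 mult_ac)

lemma contraction_2301:
  "contraction (perm4_of_list [2,3,0,1]) [A, B, C, D] = ctrace (A ** C) * ctrace (B ** D)"
  unfolding ctrace_products_expand(3)
  by (subst contraction_relabel[of "[2,3,0,1]" "[1,3,0,2]"])
    (simp_all add: perms4_lists_def perm4_of_list_def prod_lessThan_4 mult_ac)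

lemma contraction_2310:
  "contraction (perm4_of_list [2,3,1,0]) [A, B, C, D] = ctrace (A ** (D ** (B ** C)))"
  unfolding ctrace_products_expand(5)
  by (subst contraction_relabel[of "[2,3,1,0]" "[1,3,0,2]"])
    (simp_all add: perms4_lists_def perm4_of_list_def prod_lessThan_4 mult_ac)

lemma contraction_3012:
  "contraction (perm4_of_list [3,0,1,2]) [A, B, C, D] = ctrace (A ** (B ** (C ** D)))"
  unfolding ctrace_products_expand(5)
  by (subst contraction_relabel[of "[3,0,1,2]" "[1,2,3,0]"])
    (simp_all add: perms4_lists_def perm4_of_list_def prod_lessThan_4 mult_ac)

lemma contraction_3021:
  "contraction (perm4_of_list [3,0,2,1]) [A, B, C, D] = ctrace (A ** (B ** D)) * ctrace C"
  unfolding ctrace_products_expand(4)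
  by (subst contraction_relabel[of "[3,0,2,1]" "[1,2,3,0]"])
    (simp_all add: perms4_lists_def perm4_of_list_def prod_lessThan_4 mult_ac)

lemma contraction_3102:
  "contraction (perm4_of_list [3,1,0,2]) [A, B, C, D] = ctrace (A ** (C ** D)) * ctrace B"
  unfolding ctrace_products_expand(4)
  by (subst contraction_relabel[of "[3,1,0,2]" "[1,3,2,0]"])
    (simp_all add: perms4_lists_def perm4_of_list_def prod_lessThan_4 mult_ac)

lemma contraction_3120:
  "contraction (perm4_of_list [3,1,2,0]) [A, B, C, D] = ctrace (A ** D) * ctrace B * ctrace C"
  unfolding ctrace_products_expand(2)
  by (subst contraction_relabel[of "[3,1,2,0]" "[1,2,3,0]"])
    (simp_all add: perms4_lists_def perm4_of_list_def prod_lessThan_4 mult_ac)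

lemma contraction_3201:
  "contraction (perm4_of_list [3,2,0,1]) [A, B, C, D] = ctrace (A ** (C ** (B ** D)))"
  unfolding ctrace_products_expand(5)
  by (subst contraction_relabel[of "[3,2,0,1]" "[1,3,2,0]"])
    (simp_all add: perms4_lists_def perm4_of_list_def prod_lessThan_4 mult_ac)

lemma contraction_3210:
  "contraction (perm4_of_list [3,2,1,0]) [A, B, C, D] = ctrace (A ** D) * ctrace (B ** C)"
  unfolding ctrace_products_expand(3)
  by (subst contraction_relabel[of "[3,2,1,0]" "[1,3,2,0]"])
    (simp_all add: perms4_lists_def perm4_of_list_def prod_lessThan_4 mult_ac)


lemmas contraction_perms4 =
  contraction_0123 contraction_0132 contraction_0213 contraction_0231 contraction_0312 contraction_0321
  contraction_1023 contraction_1032 contraction_1203 contraction_1230 contraction_1302 contraction_1320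
  contraction_2013 contraction_2031 contraction_2103 contraction_2130 contraction_2301 contraction_2310
  contraction_3012 contraction_3021 contraction_3102 contraction_3120 contraction_3201 contraction_3210

section \<open>The second and fourth moment of the expectation value\<close>

lemma ctrace_cadjoint: "ctrace (cadjoint A) = cnj (ctrace A)"
  unfolding ctrace_def cadjoint_def by simp

lemma ctrace_cadjoint_mult: "ctrace (cadjoint A ** cadjoint A) = cnj (ctrace (A ** A))"
  unfolding ctrace_def cadjoint_def matrix_matrix_mult_def by (simp add: mult.commute)

lemma ctrace_mat_1: "ctrace (mat 1 :: complex^'n^'n) = of_nat CARD('n)"
  unfolding ctrace_def mat_def by simp

lemma unitary_mult_cancel:
  assumes "unitary X"
  shows "X ** cadjoint X = mat 1" "cadjoint X ** X = mat 1"
    and "X ** (cadjoint X ** Y) = Y" "cadjoint X ** (X ** Y) = Y"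
  using assms unfolding unitary_def by (auto simp: matrix_mul_assoc)

lemma sum_contractions_mat_1:
  "(\<Sum>\<sigma>\<in>{\<sigma>. \<sigma> permutes {..<4}}. contraction \<sigma> [mat 1, mat 1, mat 1, mat 1 :: complex^'n^'n]) =
    of_nat CARD('n) * (of_nat CARD('n) + 1) * (of_nat CARD('n) + 2) * (of_nat CARD('n) + 3)"
  unfolding sum_permutations_4 perms4_lists_def list.map sum_list.Cons sum_list.Nil contraction_perms4
  by (simp add: ctrace_mat_1 algebra_simps)

lemma sum_contractions_unitary_mat_1:
  fixes X :: "complex^'n^'n"
  assumes "unitary X"
  shows "(\<Sum>\<sigma>\<in>{\<sigma>. \<sigma> permutes {..<4}}. contraction \<sigma> [X, cadjoint X, mat 1, mat 1]) =
    (of_nat CARD('n) + 2) * (of_nat CARD('n) + 3) * (ctrace X * cnj (ctrace X) + of_nat CARD('n))"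
  unfolding sum_permutations_4 perms4_lists_def list.map sum_list.Cons sum_list.Nil contraction_perms4
  by (simp add: unitary_mult_cancel[OF assms] ctrace_cadjoint ctrace_mat_1 algebra_simps)

lemma sum_contractions_unitary:
  fixes X :: "complex^'n^'n"
  assumes "unitary X"
  shows "(\<Sum>\<sigma>\<in>{\<sigma>. \<sigma> permutes {..<4}}. contraction \<sigma> [X, X, cadjoint X, cadjoint X]) =
    (ctrace (X ** X) + ctrace X ^ 2) * cnj (ctrace (X ** X) + ctrace X ^ 2)
      + 2 * of_nat CARD('n) * (of_nat CARD('n) + 3) + 4 * (of_nat CARD('n) + 2) * (ctrace X * cnj (ctrace X))"
  unfolding sum_permutations_4 perms4_lists_def list.map sum_list.Cons sum_list.Nil contraction_perms4
  by (simp add: unitary_mult_cancel[OF assms] ctrace_cadjoint ctrace_cadjoint_mult ctrace_mat_1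
      algebra_simps power2_eq_square)

context four_coords
begin

lemma integral_braket_product_4:
  "(\<integral>\<psi>. braket \<psi> A * braket \<psi> B * braket \<psi> C * braket \<psi> D \<partial>M) =
    moment4 x y z w * (\<Sum>\<sigma>\<in>{\<sigma>. \<sigma> permutes {..<4}}. contraction \<sigma> [A, B, C, D])"
  using integral_prod_braket[of "[A, B, C, D]"] by (simp add: prod_lessThan_4)

lemma moment4_normalization:
  "moment4 x y z w * (of_nat CARD('n) * (of_nat CARD('n) + 1) * (of_nat CARD('n) + 2) * (of_nat CARD('n) + 3)) = 1"
proof -
  interpret prob_space M
    by (rule prob_space_M)
  have "(\<integral>\<psi>. braket \<psi> (mat 1) * braket \<psi> (mat 1) * braket \<psi> (mat 1) * braket \<psi> (mat 1) \<partial>M) = (\<integral>\<psi>. 1 \<partial>M)"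
    by (rule Bochner_Integration.integral_cong) (auto simp: space_M braket_mat_1)
  then show ?thesis
    unfolding integral_braket_product_4 sum_contractions_mat_1 by (simp add: prob_space)
qed

lemma mult_moment4_inverse:
  assumes "complex_of_real I = moment4 x y z w * S"
  shows "complex_of_real (real CARD('n) * (real CARD('n) + 1) * (real CARD('n) + 2) * (real CARD('n) + 3) * I) = S"
proof -
  have "complex_of_real (real CARD('n) * (real CARD('n) + 1) * (real CARD('n) + 2) * (real CARD('n) + 3) * I) =
      (moment4 x y z w * (of_nat CARD('n) * (of_nat CARD('n) + 1) * (of_nat CARD('n) + 2) * (of_nat CARD('n) + 3))) * S"
    unfolding of_real_mult of_real_add of_real_1 of_real_numeral of_real_of_nat_eq assms by (simp only: mult_ac)
  then show ?thesis
    unfolding moment4_normalization by simp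
qed

lemma integral_cmod_braket_sq:
  assumes "unitary X"
  shows "real CARD('n) * (real CARD('n) + 1) * (\<integral>\<psi>. cmod (braket \<psi> X) ^ 2 \<partial>M) =
    cmod (ctrace X) ^ 2 + real CARD('n)"
proof -
  have "complex_of_real (\<integral>\<psi>. cmod (braket \<psi> X) ^ 2 \<partial>M) =
      (\<integral>\<psi>. braket \<psi> X * braket \<psi> (cadjoint X) * braket \<psi> (mat 1) * braket \<psi> (mat 1) \<partial>M)"
    unfolding integral_complex_of_real[symmetric]
    by (rule Bochner_Integration.integral_cong)
       (auto simp: space_M braket_mat_1 complex_norm_square cnj_braket simp del: of_real_power)
  then have "complex_of_real (real CARD('n) * (real CARD('n) + 1) * (real CARD('n) + 2) * (real CARD('n) + 3) *
        (\<integral>\<psi>. cmod (braket \<psi> X) ^ 2 \<partial>M)) =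
      (of_nat CARD('n) + 2) * (of_nat CARD('n) + 3) * (ctrace X * cnj (ctrace X) + of_nat CARD('n))"
    unfolding integral_braket_product_4 sum_contractions_unitary_mat_1[OF assms]
    by (rule mult_moment4_inverse)
  then have "complex_of_real ((real CARD('n) + 2) * (real CARD('n) + 3) *
        (real CARD('n) * (real CARD('n) + 1) * (\<integral>\<psi>. cmod (braket \<psi> X) ^ 2 \<partial>M))) =
      complex_of_real ((real CARD('n) + 2) * (real CARD('n) + 3) * (cmod (ctrace X) ^ 2 + real CARD('n)))"
    by (simp add: complex_norm_square[unfolded of_real_power] ac_simps)
  moreover have "(real CARD('n) + 2) * (real CARD('n) + 3) \<noteq> 0"
    by simp
  ultimately show ?thesis
    by (metis of_real_eq_iff mult_left_cancel)
qed

lemma integral_cmod_braket_4: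
  assumes "unitary X"
  shows "real CARD('n) * (real CARD('n) + 1) * (real CARD('n) + 2) * (real CARD('n) + 3) *
      (\<integral>\<psi>. cmod (braket \<psi> X) ^ 4 \<partial>M) =
    cmod (ctrace (X ** X) + ctrace X ^ 2) ^ 2 + 2 * real CARD('n) * (real CARD('n) + 3)
      + 4 * (real CARD('n) + 2) * cmod (ctrace X) ^ 2"
proof -
  have "complex_of_real (cmod (braket \<psi> X) ^ 4) =
      braket \<psi> X * braket \<psi> X * braket \<psi> (cadjoint X) * braket \<psi> (cadjoint X)" for \<psi>
  proof -
    have "complex_of_real (cmod (braket \<psi> X) ^ 4) = complex_of_real (cmod (braket \<psi> X) ^ 2) ^ 2"
      by simp
    then show ?thesis
      unfolding complex_norm_square cnj_braket by (simp add: power2_eq_square mult_ac)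
  qed
  then have "complex_of_real (\<integral>\<psi>. cmod (braket \<psi> X) ^ 4 \<partial>M) =
      (\<integral>\<psi>. braket \<psi> X * braket \<psi> X * braket \<psi> (cadjoint X) * braket \<psi> (cadjoint X) \<partial>M)"
    unfolding integral_complex_of_real[symmetric] by simp
  then have "complex_of_real (real CARD('n) * (real CARD('n) + 1) * (real CARD('n) + 2) * (real CARD('n) + 3) *
        (\<integral>\<psi>. cmod (braket \<psi> X) ^ 4 \<partial>M)) =
      (ctrace (X ** X) + ctrace X ^ 2) * cnj (ctrace (X ** X) + ctrace X ^ 2)
      + 2 * of_nat CARD('n) * (of_nat CARD('n) + 3) + 4 * (of_nat CARD('n) + 2) * (ctrace X * cnj (ctrace X))"
    unfolding integral_braket_product_4 sum_contractions_unitary[OF assms]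
    by (rule mult_moment4_inverse)
  then have "complex_of_real (real CARD('n) * (real CARD('n) + 1) * (real CARD('n) + 2) * (real CARD('n) + 3) *
        (\<integral>\<psi>. cmod (braket \<psi> X) ^ 4 \<partial>M)) =
      complex_of_real (cmod (ctrace (X ** X) + ctrace X ^ 2) ^ 2 + 2 * real CARD('n) * (real CARD('n) + 3)
        + 4 * (real CARD('n) + 2) * cmod (ctrace X) ^ 2)"
    by (simp add: complex_norm_square[unfolded of_real_power])
  then show ?thesis
    by (simp only: of_real_eq_iff)
qed

end

lemma (in prob_space) square_expectation_le:
  fixes f :: "'a \<Rightarrow> real"
  assumes "integrable M f" "integrable M (\<lambda>x. f x ^ 2)"
  shows "expectation f ^ 2 \<le> expectation (\<lambda>x. f x ^ 2)"
  using variance_positive[of f] variance_eq[OF assms] by simp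

lemma (in unitarily_invariant_sphere) square_integral_cmod_braket_sq_le:
  "(\<integral>\<psi>. cmod (braket \<psi> X) ^ 2 \<partial>M) ^ 2 \<le> (\<integral>\<psi>. cmod (braket \<psi> X) ^ 4 \<partial>M)"
proof -
  interpret prob_space M
    by (rule prob_space_M)
  have "integrable M (\<lambda>\<psi>. cmod (braket \<psi> X) ^ k)" for k
    by (intro integrable_continuous continuous_intros)
  then show ?thesis
    using square_expectation_le[of "\<lambda>\<psi>. cmod (braket \<psi> X) ^ 2"] by (simp flip: power_mult)
qed

lemma obtain_distinct_4:
  assumes "CARD('n) \<ge> 4"
  obtains x y z w :: "'n::finite" where "distinct [x, y, z, w]"
proof -
  obtain T :: "'n set" where T: "card T = 4"
    using obtain_subset_with_card_n[of 4 "UNIV :: 'n set"] assms by auto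
  then obtain xs where xs: "set xs = T" "distinct xs"
    using finite_distinct_list[of T] card.infinite by force
  then have "length xs = 4"
    using distinct_card T by fastforce
  then obtain x y z w where "xs = [x, y, z, w]"
    by (auto simp: numeral_eq_Suc length_Suc_conv)
  then show ?thesis
    using that xs(2) by blast
qed

theorem lemma2:
  fixes X :: "complex^'n^'n" and M :: "(complex^'n) measure"
  assumes "CARD('n) \<ge> 4"
    and "unitary X"
    and "unitarily_invariant_sphere_measure M"
  defines "d \<equiv> real CARD('n)"
    and "F \<equiv> integral\<^sup>L M (\<lambda>\<psi>. cmod (braket \<psi> X) ^ 2)"
    and "D \<equiv> sqrt (integral\<^sup>L M (\<lambda>\<psi>. cmod (braket \<psi> X) ^ 4) - (integral\<^sup>L M (\<lambda>\<psi>. cmod (braket \<psi> X) ^ 2)) ^ 2)"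
    and "P \<equiv> cmod (ctrace X)"
    and "Q \<equiv> cmod (ctrace (X ** X) + (ctrace X) ^ 2)"
  shows "P ^ 2 = d * (d + 1) * F - d
     \<and> Q ^ 2 = d * (d + 1) * (d + 2) * (d + 3) * (D ^ 2 + F ^ 2) - 2 * d * (d + 3) - 4 * (d + 2) * P ^ 2"
proof -
  obtain x y z w :: 'n where "distinct [x, y, z, w]"
    using obtain_distinct_4[OF assms(1)] .
  then interpret four_coords M x y z w
    using assms(3) by unfold_locales
  have "D ^ 2 + F ^ 2 = (\<integral>\<psi>. cmod (braket \<psi> X) ^ 4 \<partial>M)"
    using square_integral_cmod_braket_sq_le[of X] unfolding D_def F_def by simp
  then show ?thesis
    using integral_cmod_braket_sq[OF assms(2)] integral_cmod_braket_4[OF assms(2)]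
    unfolding d_def F_def P_def Q_def by simp
qed

end
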